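(* Under the setting described in the context (deterministic case, with exact partial gradients $G_{i_k} = U_{i_k}^T g(x_k)$, i.e. $\bar\sigma_k = 0$ for $k=1,\ldots,N$), suppose the random block indices $\{i_k\}$ are uniformly distributed, i.e. $p_1 = \cdots = p_b = 1/b$, and the stepsizes are set to $\gamma_k = 1/\bar L$, $k = 1,\ldots,N$, where $\bar L := \max_{i=1,\ldots,b} L_i$. Then for any $N \ge 1$, $$\mathbb{E}\big[\|\mathcal{G}_X(x_R, g(x_R), \gamma_R)\|^2\big] \le \frac{2 b \bar L\,[\phi(x_1) - \phi^*]}{N}.$$
   Context: Consider the composite problem $\phi^* := \min_{x \in X}\{\phi(x) := f(x) + \chi(x)\}$, where $X = X_1 \times \cdots \times X_b$ with $X_i \subseteq \mathbb{R}^{n_i}$ closed convex, $\sum_i n_i = n$. Let $U_i \in \mathbb{R}^{n\times n_i}$ with $(U_1,\ldots,U_b) = I_n$, $x^{(i)} = U_i^T x$, and $\|x\|^2 = \sum_{i=1}^b \|x^{(i)}\|_i^2$. The function $f$ is smooth but possibly nonconvex, with gradient $g(\cdot)$ whose blocks $g_i = U_i^T g$ satisfy $\|g_i(x + U_i\rho_i) - g_i(x)\|_{i,*} \le L_i \|\rho_i\|_i$ for all $\rho_i \in \mathbb{R}^{n_i}$. The function $\chi$ is convex and block separable: $\chi(x) = \sum_i \chi_i(x^{(i)})$ with $\chi_i$ closed convex. For each $i$, $\omega_i: X_i \to \mathbb{R}$ is continuously differentiable and $1$-strongly convex w.r.t. $\|\cdot\|_i$, with Bregman distance $V_i(z,x)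 = \omega_i(x) - \omega_i(z) - \langle \nabla\omega_i(z), x - z\rangle$, satisfying the quadratic growth condition $V_i(z,x) \le \frac{Q}{2}\|z - x\|_i^2$. The composite prox-mapping is $\mathcal{P}_i(x, y, \gamma) := \arg\min_{z \in X_i} \{\langle y, z - x\rangle + \frac{1}{\gamma} V_i(z,x) + \chi_i(z)\}$, and the composite projected gradient $\mathcal{G}_X(x,y,\gamma) = (\mathcal{G}_1,\ldots,\mathcal{G}_b)$ has blocks $\mathcal{G}_i(x,y,\gamma) := \frac{1}{\gamma}[U_i^T x - \mathcal{P}_i(U_i^T x, U_i^T y, \gamma)]$. The nonconvex stochastic block mirror descent algorithm: given $x_1 \in X$, stepsizes $\gamma_k < 2/L_i$ and probabilities $p_i$, for $k = 1,\ldots,N$ draw $i_k$ with $\Pr\{i_k = i\} = p_i$, compute the partial gradient $G_{i_k}$ (here $G_{i_k} = U_{i_k}^T g(x_k)$), and set $x_{k+1}^{(i_k)} = \mathcal{P}_{i_k}(x_k^{(i_k)}, G_{i_k}, \gamma_k)$, $x_{k+1}^{(i)} = x_k^{(i)}$ for $i \ne i_k$. The output is $\bar x_N = x_R$, where $R$ is random with $\Pr(R = k) = \frac{\gamma_k \min_{i} p_i(1 - \frac{L_i}{2}\gamma_k)}{\sum_{j=1}^N \gamma_j \min_i p_i (1 - \frac{L_i}{2}\gamma_j)}$, $k = 1,\ldots,N$. The expectation is taken w.r.t. $\{i_k\}$ and $R$. *)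

theory Defs
  imports "HOL-Analysis.Analysis"
begin

text \<open>The ambient space R^n is real^'n; the coordinates are partitioned
 into blocks 0..<b by blk :: 'n => nat. The block x^(i) = U_i^T x is represented by
 its isometric image U_i U_i^T x in R^n (zero outside block i).\<close>

definition bsub :: "('n::finite \<Rightarrow> nat) \<Rightarrow> nat \<Rightarrow> (real^'n) set" where
  "bsub blk i = {x. \<forall>j. blk j \<noteq> i \<longrightarrow> x $ j = 0}"

definition bproj :: "('n::finite \<Rightarrow> nat) \<Rightarrow> nat \<Rightarrow> real^'n \<Rightarrow> real^'n" where
  "bproj blk i x = (\<chi> j. if blk j = i then x $ j else 0)"

definition is_block_norm :: "('n::finite \<Rightarrow> nat) \<Rightarrow> nat \<Rightarrow> (real^'n \<Rightarrow> real) \<Rightarrow> bool" where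
  "is_block_norm blk i nrm \<longleftrightarrow>
     (\<forall>x\<in>bsub blk i. 0 \<le> nrm x \<and> (nrm x = 0 \<longleftrightarrow> x = 0)) \<and>
     (\<forall>x\<in>bsub blk i. \<forall>c. nrm (c *\<^sub>R x) = \<bar>c\<bar> * nrm x) \<and>
     (\<forall>x\<in>bsub blk i. \<forall>y\<in>bsub blk i. nrm (x + y) \<le> nrm x + nrm y)"

definition dual_norm :: "('n::finite \<Rightarrow> nat) \<Rightarrow> nat \<Rightarrow> (real^'n \<Rightarrow> real) \<Rightarrow> real^'n \<Rightarrow> real" where
  "dual_norm blk i nrm y = Sup ((\<lambda>z. inner y z) ` {z \<in> bsub blk i. nrm z \<le> 1})"

definition bnorm2 :: "('n::finite \<Rightarrow> nat) \<Rightarrow> nat \<Rightarrow> (nat \<Rightarrow> real^'n \<Rightarrow> real) \<Rightarrow> real^'n \<Rightarrow> real" where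
  "bnorm2 blk b nrm x = (\<Sum>i<b. (nrm i (bproj blk i x))\<^sup>2)"

definition Xprod :: "('n::finite \<Rightarrow> nat) \<Rightarrow> nat \<Rightarrow> (nat \<Rightarrow> (real^'n) set) \<Rightarrow> (real^'n) set" where
  "Xprod blk b Xb = {x. \<forall>i<b. bproj blk i x \<in> Xb i}"

definition strongly_convex_on :: "(real^'n::finite) set \<Rightarrow> (real^'n \<Rightarrow> real) \<Rightarrow> (real^'n \<Rightarrow> real) \<Rightarrow> bool" where
  "strongly_convex_on S nrm w \<longleftrightarrow>
     (\<forall>x\<in>S. \<forall>y\<in>S. \<forall>t::real. 0 \<le> t \<and> t \<le> 1 \<longrightarrow>
        w (t *\<^sub>R x + (1 - t) *\<^sub>R y) \<le> t * w x + (1 - t) * w y - t * (1 - t) / 2 * (nrm (x - y))\<^sup>2)"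

definition bregman :: "(real^'n::finite \<Rightarrow> real) \<Rightarrow> (real^'n \<Rightarrow> real^'n) \<Rightarrow> real^'n \<Rightarrow> real^'n \<Rightarrow> real" where
  "bregman w dw x z = w z - w x - inner (dw x) (z - x)"

definition prox :: "(real^'n::finite) set \<Rightarrow> (real^'n \<Rightarrow> real) \<Rightarrow> (real^'n \<Rightarrow> real^'n) \<Rightarrow> (real^'n \<Rightarrow> real)
     \<Rightarrow> real^'n \<Rightarrow> real^'n \<Rightarrow> real \<Rightarrow> real^'n" where
  "prox Xi w dw chi x y \<gamma> =
     (SOME z. z \<in> Xi \<and> (\<forall>u\<in>Xi.
        inner y (z - x) + (1 / \<gamma>) * bregman w dw x z + chi z
          \<le> inner y (u - x) + (1 / \<gamma>) * bregman w dw x u + chi u))"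

definition grad_map :: "('n::finite \<Rightarrow> nat) \<Rightarrow> nat \<Rightarrow> (nat \<Rightarrow> (real^'n) set) \<Rightarrow> (nat \<Rightarrow> real^'n \<Rightarrow> real)
     \<Rightarrow> (nat \<Rightarrow> real^'n \<Rightarrow> real^'n) \<Rightarrow> (nat \<Rightarrow> real^'n \<Rightarrow> real)
     \<Rightarrow> real^'n \<Rightarrow> real^'n \<Rightarrow> real \<Rightarrow> real^'n" where
  "grad_map blk b Xb w dw chi x y \<gamma> =
     (\<Sum>i<b. (1 / \<gamma>) *\<^sub>R (bproj blk i x - prox (Xb i) (w i) (dw i) (chi i) (bproj blk i x) (bproj blk i y) \<gamma>))"

definition phi_obj :: "('n::finite \<Rightarrow> nat) \<Rightarrow> nat \<Rightarrow> (real^'n \<Rightarrow> real) \<Rightarrow> (nat \<Rightarrow> real^'n \<Rightarrow> real) \<Rightarrow> real^'n \<Rightarrow> real" where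
  "phi_obj blk b f chi x = f x + (\<Sum>i<b. chi i (bproj blk i x))"

text \<open>Iterates of the (deterministic-gradient) nonconvex SBMD method.
  sbmd_iter ... idx m = x_(m+1); idx k = i_k is the block chosen at iteration k, gam k = gamma_k.\<close>
fun sbmd_iter :: "('n::finite \<Rightarrow> nat) \<Rightarrow> (nat \<Rightarrow> (real^'n) set) \<Rightarrow> (nat \<Rightarrow> real^'n \<Rightarrow> real)
     \<Rightarrow> (nat \<Rightarrow> real^'n \<Rightarrow> real^'n) \<Rightarrow> (nat \<Rightarrow> real^'n \<Rightarrow> real) \<Rightarrow> (real^'n \<Rightarrow> real^'n)
     \<Rightarrow> (nat \<Rightarrow> real) \<Rightarrow> real^'n \<Rightarrow> (nat \<Rightarrow> nat) \<Rightarrow> nat \<Rightarrow> real^'n" where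
  "sbmd_iter blk Xb w dw chi g gam x1 idx 0 = x1"
| "sbmd_iter blk Xb w dw chi g gam x1 idx (Suc m) =
     (let x = sbmd_iter blk Xb w dw chi g gam x1 idx m; i = idx (Suc m) in
      x - bproj blk i x
        + prox (Xb i) (w i) (dw i) (chi i) (bproj blk i x) (bproj blk i (g x)) (gam (Suc m)))"

text \<open>Distribution of the random output index R on {1..N}.\<close>
definition probR :: "nat \<Rightarrow> (nat \<Rightarrow> real) \<Rightarrow> (nat \<Rightarrow> real) \<Rightarrow> (nat \<Rightarrow> real) \<Rightarrow> nat \<Rightarrow> nat \<Rightarrow> real" where
  "probR b p L gam N k =
     gam k * Min ((\<lambda>i. p i * (1 - L i / 2 * gam k)) ` {..<b})
     / (\<Sum>j=1..N. gam j * Min ((\<lambda>i. p i * (1 - L i / 2 * gam j)) ` {..<b}))"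

text \<open>E[ ||G_X(x_R, g(x_R), gamma_R)||^2 ], expectation over i_1..i_N (independent,
  Pr(i_k = i) = p i) and over R (independent of them).\<close>
definition expected_gm2 where
  "expected_gm2 blk b nrm Xb w dw chi g p L gam x1 N =
     (\<Sum>idx\<in>Pi\<^sub>E {1..N} (\<lambda>_. {..<b}). (\<Prod>k=1..N. p (idx k)) *
        (\<Sum>k=1..N. probR b p L gam N k *
           bnorm2 blk b nrm (grad_map blk b Xb w dw chi
               (sbmd_iter blk Xb w dw chi g gam x1 idx (k - 1))
               (g (sbmd_iter blk Xb w dw chi g gam x1 idx (k - 1))) (gam k))))"

end

theory Submission
  imports Defs
begin

text \<open>
  Each block update is a sufficient-decrease step. Optimality of the prox point z together with
  the 1-strong convexity of the Bregman term gives
  <g_i(x), z - x_i> + chi_i(z) - chi_i(x_i) <= -(1/gamma) |z - x_i|_i^2, and the block descent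
  lemma bounds the change of f by <g_i(x), z - x_i> + L_i/2 |z - x_i|_i^2. With gamma = 1/Lbar
  this yields |G_i(x)|_i^2 <= 2 Lbar (phi(x) - phi(x')) for the point x' obtained by updating
  block i. Averaging over the b equally likely blocks, the expected squared gradient mapping at
  x_k is at most 2 b Lbar times the expected decrease of phi from x_k to x_(k+1); these decreases
  telescope to at most phi(x_1) - phi*. With a constant stepsize R is uniform on {1..N}, which
  divides the bound by N.
\<close>

section \<open>Block subspaces\<close>

lemma bsub_zero [simp]: "0 \<in> bsub blk i"
  by (simp add: bsub_def)

lemma bsub_add: "x \<in> bsub blk i \<Longrightarrow> y \<in> bsub blk i \<Longrightarrow> x + y \<in> bsub blk i"
  by (simp add: bsub_def)

lemma bsub_diff: "x \<in> bsub blk i \<Longrightarrow> y \<in> bsub blk i \<Longrightarrow> x - y \<in> bsub blk i"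
  by (simp add: bsub_def)

lemma bsub_scaleR: "x \<in> bsub blk i \<Longrightarrow> c *\<^sub>R x \<in> bsub blk i"
  by (simp add: bsub_def)

lemma bsub_sum: "(\<And>j. j \<in> S \<Longrightarrow> f j \<in> bsub blk i) \<Longrightarrow> sum f S \<in> bsub blk i"
  by (induction S rule: infinite_finite_induct) (auto intro: bsub_add)

lemma closed_bsub: "closed (bsub blk i)"
proof -
  have "bsub blk i = (\<Inter>j\<in>{j. blk j \<noteq> i}. {x. x $ j = 0})"
    by (auto simp: bsub_def)
  moreover have "closed {x::real^'a. x $ j = 0}" for j
    by (intro closed_Collect_eq continuous_intros)
  ultimately show ?thesis by auto
qed

lemma bsub_trivial: "\<nexists>j. blk j = i \<Longrightarrow> bsub blk i = {0}"
  by (auto simp: bsub_def vec_eq_iff)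

lemma bproj_in_bsub: "bproj blk i x \<in> bsub blk i"
  by (simp add: bsub_def bproj_def)

lemma bproj_bsub_same: "x \<in> bsub blk i \<Longrightarrow> bproj blk i x = x"
  by (auto simp: bsub_def bproj_def vec_eq_iff)

lemma bproj_bsub_other: "x \<in> bsub blk j \<Longrightarrow> j \<noteq> i \<Longrightarrow> bproj blk i x = 0"
  by (auto simp: bsub_def bproj_def vec_eq_iff)

lemma bproj_add: "bproj blk i (x + y) = bproj blk i x + bproj blk i y"
  by (simp add: bproj_def vec_eq_iff)

lemma bproj_diff: "bproj blk i (x - y) = bproj blk i x - bproj blk i y"
  by (simp add: bproj_def vec_eq_iff)

lemma bproj_sum: "bproj blk i (sum f S) = (\<Sum>j\<in>S. bproj blk i (f j))"
  by (induction S rule: infinite_finite_induct) (auto simp: bproj_add bproj_def vec_eq_iff)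

lemma bproj_bproj: "bproj blk j (bproj blk i x) = (if i = j then bproj blk i x else 0)"
  by (auto simp: bproj_def vec_eq_iff)

lemma inner_bproj: "\<rho> \<in> bsub blk i \<Longrightarrow> inner v \<rho> = inner (bproj blk i v) \<rho>"
  by (auto simp: bsub_def bproj_def inner_vec_def intro!: sum.cong)

section \<open>Block norms\<close>

locale block_norm =
  fixes blk :: "'n::finite \<Rightarrow> nat" and i :: nat and nrm :: "real^'n \<Rightarrow> real"
  assumes is_norm: "is_block_norm blk i nrm"
begin

lemma nonneg: "x \<in> bsub blk i \<Longrightarrow> 0 \<le> nrm x"
  using is_norm by (auto simp: is_block_norm_def)

lemma zero_iff: "x \<in> bsub blk i \<Longrightarrow> nrm x = 0 \<longleftrightarrow> x = 0"
  using is_norm by (auto simp: is_block_norm_def)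

lemma zero [simp]: "nrm 0 = 0"
  using zero_iff[of 0] by simp

lemma scaleR: "x \<in> bsub blk i \<Longrightarrow> nrm (c *\<^sub>R x) = \<bar>c\<bar> * nrm x"
  using is_norm by (auto simp: is_block_norm_def)

lemma triangle: "x \<in> bsub blk i \<Longrightarrow> y \<in> bsub blk i \<Longrightarrow> nrm (x + y) \<le> nrm x + nrm y"
  using is_norm by (auto simp: is_block_norm_def)

lemma minus_commute: "x \<in> bsub blk i \<Longrightarrow> y \<in> bsub blk i \<Longrightarrow> nrm (x - y) = nrm (y - x)"
  using scaleR[of "y - x" "-1"] by (simp add: bsub_diff)

lemma sum_le: "(\<And>j. j \<in> S \<Longrightarrow> f j \<in> bsub blk i) \<Longrightarrow> nrm (sum f S) \<le> (\<Sum>j\<in>S. nrm (f j))"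
proof (induction S rule: infinite_finite_induct)
  case (insert a S)
  then have "nrm (sum f (insert a S)) \<le> nrm (f a) + nrm (sum f S)"
    by (auto intro: triangle bsub_sum)
  with insert show ?case by simp
qed simp_all

lemma nrm_le_norm: "\<exists>C\<ge>0. \<forall>x\<in>bsub blk i. nrm x \<le> C * norm x"
proof -
  define J where "J = {j. blk j = i}"
  define C where "C = (\<Sum>j\<in>J. nrm (axis j 1 :: real^'n))"
  have axis: "c *\<^sub>R axis j 1 \<in> bsub blk i" if "j \<in> J" for j c
    using that by (auto simp: J_def bsub_def axis_def)
  have "nrm x \<le> C * norm x" if x: "x \<in> bsub blk i" for x
  proof -
    have expand: "x = (\<Sum>j\<in>J. (x $ j) *\<^sub>R axis j 1)"
      using x by (auto simp: vec_eq_iff J_def bsub_def axis_def sum.delta' if_distrib cong: if_cong)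
    have "nrm x \<le> (\<Sum>j\<in>J. nrm ((x $ j) *\<^sub>R axis j 1))"
      by (subst expand, rule sum_le) (rule axis)
    also have "\<dots> = (\<Sum>j\<in>J. \<bar>x $ j\<bar> * nrm (axis j 1))"
      using axis[of _ 1] by (intro sum.cong refl scaleR) simp
    also have "\<dots> \<le> (\<Sum>j\<in>J. norm x * nrm (axis j 1))"
      using axis[of _ 1] by (intro sum_mono mult_right_mono nonneg) (auto simp: component_le_norm_cart)
    finally show ?thesis
      by (simp add: C_def sum_distrib_left mult.commute)
  qed
  moreover have "C \<ge> 0"
    using axis[of _ 1] unfolding C_def by (intro sum_nonneg nonneg) simp
  ultimately show ?thesis by blast
qed

lemma lipschitz_on_bsub: "\<exists>C. C-lipschitz_on (bsub blk i) nrm"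
proof -
  obtain C where C: "C \<ge> 0" "\<And>x. x \<in> bsub blk i \<Longrightarrow> nrm x \<le> C * norm x"
    using nrm_le_norm by blast
  have "\<bar>nrm x - nrm y\<bar> \<le> C * norm (x - y)" if "x \<in> bsub blk i" "y \<in> bsub blk i" for x y
  proof -
    have "nrm x \<le> nrm (x - y) + nrm y" "nrm y \<le> nrm (x - y) + nrm x"
      using triangle[of "x - y" y] triangle[of "y - x" x] minus_commute[of x y] that
      by (simp_all add: bsub_diff)
    moreover have "nrm (x - y) \<le> C * norm (x - y)"
      using C that by (simp add: bsub_diff)
    ultimately show ?thesis by linarith
  qed
  then have "C-lipschitz_on (bsub blk i) nrm"
    using C by (intro lipschitz_onI) (auto simp: dist_real_def dist_norm)
  then show ?thesis ..
qed

lemma norm_le_nrm: "\<exists>c>0. \<forall>x\<in>bsub blk i. c * norm x \<le> nrm x"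
proof (cases "\<exists>j. blk j = i")
  case False
  then show ?thesis
    using bsub_trivial[of blk i] by (auto intro: exI[of _ 1])
next
  case True
  then obtain j where j: "blk j = i" by blast
  define T where "T = bsub blk i \<inter> sphere 0 1"
  have "axis j 1 \<in> bsub blk i"
    using j by (auto simp: bsub_def axis_def)
  then have "axis j 1 \<in> T"
    unfolding T_def by simp
  moreover have "compact T"
    unfolding T_def by (intro closed_Int_compact closed_bsub compact_sphere)
  moreover have "continuous_on T nrm"
  proof -
    obtain C where "C-lipschitz_on (bsub blk i) nrm"
      using lipschitz_on_bsub by blast
    then have "C-lipschitz_on T nrm"
      by (rule lipschitz_on_subset) (simp add: T_def)
    then show ?thesis
      by (rule lipschitz_on_continuous_on)
  qed
  ultimately obtain x0 where x0: "x0 \<in> T" "\<And>y. y \<in> T \<Longrightarrow> nrm x0 \<le> nrm y"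
    using continuous_attains_inf[of T nrm] by blast
  have "nrm x0 * norm x \<le> nrm x" if x: "x \<in> bsub blk i" for x
  proof (cases "x = 0")
    case False
    have "(1 / norm x) *\<^sub>R x \<in> T"
      using x False by (auto simp: T_def bsub_scaleR)
    then have "nrm x0 \<le> nrm ((1 / norm x) *\<^sub>R x)"
      by (rule x0(2))
    then show ?thesis
      using scaleR x False by (simp add: field_simps)
  qed simp
  moreover have "nrm x0 > 0"
    using x0(1) nonneg zero_iff by (force simp: T_def)
  ultimately show ?thesis by blast
qed

lemma inner_le_dual_norm:
  assumes x: "x \<in> bsub blk i"
  shows "inner v x \<le> dual_norm blk i nrm v * nrm x"
proof (cases "x = 0")
  case False
  obtain c where c: "c > 0" "\<And>x. x \<in> bsub blk i \<Longrightarrow> c * norm x \<le> nrm x"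
    using norm_le_nrm by blast
  let ?B = "{z \<in> bsub blk i. nrm z \<le> 1}"
  have "inner v z \<le> norm v / c" if "z \<in> ?B" for z
  proof -
    have "norm z \<le> 1 / c"
      using c that by (auto simp: field_simps intro: order_trans[OF c(2)])
    then have "norm v * norm z \<le> norm v * (1 / c)"
      by (intro mult_left_mono) auto
    then show ?thesis
      using norm_cauchy_schwarz[of v z] by simp
  qed
  then have bdd: "bdd_above ((\<lambda>z. inner v z) ` ?B)"
    by (intro bdd_aboveI2)
  have pos: "nrm x > 0"
    using False nonneg[OF x] zero_iff[OF x] by linarith
  then have "(1 / nrm x) *\<^sub>R x \<in> ?B"
    using x scaleR by (simp add: bsub_scaleR)
  then have "inner v ((1 / nrm x) *\<^sub>R x) \<le> dual_norm blk i nrm v"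
    unfolding dual_norm_def by (rule cSup_upper[OF imageI bdd])
  then show ?thesis
    using pos by (simp add: field_simps)
qed simp

lemma inner_block_gradient_increment_le:
  fixes g :: "real^'n \<Rightarrow> real^'n"
  assumes lipschitz: "\<And>x \<rho>. \<rho> \<in> bsub blk i \<Longrightarrow>
       dual_norm blk i nrm (bproj blk i (g (x + \<rho>)) - bproj blk i (g x)) \<le> L * nrm \<rho>"
    and \<rho>: "\<rho> \<in> bsub blk i" and "0 \<le> t"
  shows "inner (g (x + t *\<^sub>R \<rho>)) \<rho> - inner (g x) \<rho> \<le> L * t * (nrm \<rho>)\<^sup>2"
proof -
  have "inner (g (x + t *\<^sub>R \<rho>)) \<rho> - inner (g x) \<rho>
      = inner (bproj blk i (g (x + t *\<^sub>R \<rho>)) - bproj blk i (g x)) \<rho>"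
    using inner_bproj[OF \<rho>, of "g (x + t *\<^sub>R \<rho>) - g x"] by (simp add: inner_diff_left bproj_diff)
  also have "\<dots> \<le> dual_norm blk i nrm (bproj blk i (g (x + t *\<^sub>R \<rho>)) - bproj blk i (g x)) * nrm \<rho>"
    by (rule inner_le_dual_norm[OF \<rho>])
  also have "\<dots> \<le> L * nrm (t *\<^sub>R \<rho>) * nrm \<rho>"
    using \<rho> by (intro mult_right_mono lipschitz bsub_scaleR nonneg)
  also have "\<dots> = L * t * (nrm \<rho>)\<^sup>2"
    using scaleR[OF \<rho>, of t] \<open>0 \<le> t\<close> by (simp add: power2_eq_square)
  finally show ?thesis .
qed

lemma block_descent:
  fixes f :: "real^'n \<Rightarrow> real" and g :: "real^'n \<Rightarrow> real^'n"
  assumes gradient: "\<And>x. (f has_derivative (\<lambda>h. inner (g x) h)) (at x)"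
    and lipschitz: "\<And>x \<rho>. \<rho> \<in> bsub blk i \<Longrightarrow>
       dual_norm blk i nrm (bproj blk i (g (x + \<rho>)) - bproj blk i (g x)) \<le> L * nrm \<rho>"
    and \<rho>: "\<rho> \<in> bsub blk i"
  shows "f (x + \<rho>) \<le> f x + inner (g x) \<rho> + L / 2 * (nrm \<rho>)\<^sup>2"
proof -
  define \<psi> where "\<psi> t = f (x + t *\<^sub>R \<rho>) - t * inner (g x) \<rho> - L / 2 * t\<^sup>2 * (nrm \<rho>)\<^sup>2" for t
  have "\<psi> 1 \<le> \<psi> 0"
  proof (rule DERIV_nonpos_imp_nonincreasing[of 0 1])
    fix t :: real assume t: "0 \<le> t" "t \<le> 1"
    define D where "D = inner (g (x + t *\<^sub>R \<rho>)) \<rho> - inner (g x) \<rho> - L * t * (nrm \<rho>)\<^sup>2"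
    have f_along: "((\<lambda>t. f (x + t *\<^sub>R \<rho>)) has_derivative (\<lambda>s. inner (g (x + t *\<^sub>R \<rho>)) (s *\<^sub>R \<rho>))) (at t)"
      by (rule has_derivative_compose[of "\<lambda>t. x + t *\<^sub>R \<rho>" "\<lambda>s. s *\<^sub>R \<rho>", OF _ gradient])
         (auto intro!: derivative_eq_intros)
    have "(\<psi> has_derivative (\<lambda>s. D * s)) (at t)"
      unfolding \<psi>_def D_def
      by (rule derivative_eq_intros f_along refl)+ (auto simp: algebra_simps power2_eq_square)
    then have "DERIV \<psi> t :> D"
      unfolding has_field_derivative_def by (rule has_derivative_eq_rhs) (simp add: fun_eq_iff)
    moreover have "D \<le> 0"
      using inner_block_gradient_increment_le[OF lipschitz \<rho> t(1)] by (simp add: D_def)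
    ultimately show "\<exists>y. DERIV \<psi> t :> y \<and> y \<le> 0"
      by blast
  qed simp
  then show ?thesis
    by (simp add: \<psi>_def)
qed

end

section \<open>The composite prox-mapping\<close>

lemma closed_sublevels_attains_inf:
  fixes h :: "'a::topological_space \<Rightarrow> real"
  assumes K: "compact K" "K \<noteq> {}" "K \<subseteq> D" and closed: "\<And>t. closed {u \<in> D. h u \<le> t}"
  shows "\<exists>u\<in>K. \<forall>v\<in>K. h u \<le> h v"
proof -
  define I where "I = {t. \<exists>v\<in>K. h v \<le> t}"
  have "K \<inter> (\<Inter>t\<in>I. {u \<in> D. h u \<le> t}) \<noteq> {}"
  proof (rule compact_imp_fip_image[OF K(1) closed])
    fix I' assume I': "finite I'" "I' \<subseteq> I"
    show "K \<inter> (\<Inter>t\<in>I'. {u \<in> D. h u \<le> t}) \<noteq> {}"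
    proof (cases "I' = {}")
      case False
      then have "Min I' \<in> I"
        using I' Min_in by blast
      then obtain v where v: "v \<in> K" "h v \<le> Min I'"
        by (auto simp: I_def)
      then have "v \<in> K \<inter> (\<Inter>t\<in>I'. {u \<in> D. h u \<le> t})"
        using K(3) I'(1) by (auto intro: order_trans[OF v(2) Min_le])
      then show ?thesis by blast
    qed (use K in simp)
  qed
  then obtain u where "u \<in> K" "\<And>t. t \<in> I \<Longrightarrow> h u \<le> t"
    by blast
  then show ?thesis
    by (auto simp: I_def)
qed

lemma tendsto_at_right_0_difference_quotient:
  fixes w :: "'a::real_inner \<Rightarrow> real"
  assumes w: "(w has_derivative (\<lambda>h. inner d h)) (at x within S)"
    and S: "convex S" "x \<in> S" "z \<in> S"
  shows "((\<lambda>t. (w (x + t *\<^sub>R (z - x)) - w x) / t) \<longlongrightarrow> inner d (z - x)) (at_right 0)"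
proof -
  let ?seg = "\<lambda>t. x + t *\<^sub>R (z - x)"
  have "?seg ` {0..1} \<subseteq> S"
  proof
    fix u assume "u \<in> ?seg ` {0..1}"
    then obtain t where t: "0 \<le> t" "t \<le> 1" "u = t *\<^sub>R z + (1 - t) *\<^sub>R x"
      by (auto simp: algebra_simps)
    then show "u \<in> S"
      using S by (simp add: convex_def)
  qed
  then have "(w has_derivative (\<lambda>h. inner d h)) (at (?seg 0) within ?seg ` {0..1})"
    using has_derivative_subset[OF w] by simp
  with _ have "((w \<circ> ?seg) has_derivative ((\<lambda>h. inner d h) \<circ> (\<lambda>s. s *\<^sub>R (z - x)))) (at 0 within {0..1})"
    by (rule diff_chain_within) (auto intro!: derivative_eq_intros)
  then have "((w \<circ> ?seg) has_field_derivative inner d (z - x)) (at 0 within {0..1})"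
    unfolding has_field_derivative_def
    by (rule has_derivative_eq_rhs) (simp add: fun_eq_iff mult.commute)
  then show ?thesis
    by (simp add: has_field_derivative_iff at_within_Icc_at_right o_def)
qed

locale prox_block = block_norm blk i nrm
  for blk :: "'n::finite \<Rightarrow> nat" and i nrm +
  fixes Xi :: "(real^'n) set" and w :: "real^'n \<Rightarrow> real" and dw :: "real^'n \<Rightarrow> real^'n"
    and chi :: "real^'n \<Rightarrow> real"
  assumes Xi_bsub: "Xi \<subseteq> bsub blk i" and closed_Xi: "closed Xi" and convex_Xi: "convex Xi"
    and chi_convex: "convex_on Xi chi" and chi_closed_epigraph: "closed {(x, t). x \<in> Xi \<and> chi x \<le> t}"
    and w_derivative: "\<And>z. z \<in> Xi \<Longrightarrow> (w has_derivative (\<lambda>h. inner (dw z) h)) (at z within Xi)"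
    and w_strongly_convex: "strongly_convex_on Xi nrm w"
begin

lemma convex_comb_in_Xi: "u \<in> Xi \<Longrightarrow> v \<in> Xi \<Longrightarrow> 0 \<le> t \<Longrightarrow> t \<le> 1 \<Longrightarrow> t *\<^sub>R u + (1 - t) *\<^sub>R v \<in> Xi"
  using convex_Xi by (simp add: convex_def)

lemma bregman_ge_half_sq:
  assumes x: "x \<in> Xi" and z: "z \<in> Xi"
  shows "1/2 * (nrm (z - x))\<^sup>2 \<le> bregman w dw x z"
proof -
  define n2 where "n2 = (nrm (z - x))\<^sup>2"
  let ?q = "\<lambda>t. (w (x + t *\<^sub>R (z - x)) - w x) / t"
  have "?q t \<le> w z - w x - (1 - t) / 2 * n2" if t: "0 < t" "t < 1" for t
  proof -
    have "x + t *\<^sub>R (z - x) = t *\<^sub>R z + (1 - t) *\<^sub>R x"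
      by (simp add: algebra_simps)
    moreover have "w (t *\<^sub>R z + (1 - t) *\<^sub>R x) \<le> t * w z + (1 - t) * w x - t * (1 - t) / 2 * n2"
      using w_strongly_convex x z t unfolding strongly_convex_on_def n2_def by auto
    ultimately have "w (x + t *\<^sub>R (z - x)) - w x \<le> t * (w z - w x - (1 - t) / 2 * n2)"
      by (simp add: algebra_simps)
    then show ?thesis
      using t by (simp add: divide_le_eq mult.commute)
  qed
  then have "eventually (\<lambda>t. ?q t \<le> w z - w x - (1 - t) / 2 * n2) (at_right 0)"
    unfolding eventually_at_right_field by (auto intro!: exI[of _ 1])
  moreover have "((\<lambda>t. w z - w x - (1 - t) / 2 * n2) \<longlongrightarrow> w z - w x - (1 - 0) / 2 * n2) (at_right 0)"
    by (intro tendsto_intros) simp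
  moreover note tendsto_at_right_0_difference_quotient[OF w_derivative[OF x] convex_Xi x z]
  ultimately have "inner (dw x) (z - x) \<le> w z - w x - (1 - 0) / 2 * n2"
    by (intro tendsto_le[of "at_right (0::real)"]) auto
  then show ?thesis
    unfolding bregman_def n2_def by simp
qed

definition prox_objective :: "real^'n \<Rightarrow> real \<Rightarrow> real^'n \<Rightarrow> real^'n \<Rightarrow> real" where
  "prox_objective y \<gamma> x u = inner y (u - x) + (1 / \<gamma>) * bregman w dw x u + chi u"

lemma prox_objective_strongly_convex:
  assumes "\<gamma> > 0" and u: "u \<in> Xi" and v: "v \<in> Xi" and t: "0 \<le> t" "t \<le> 1"
  shows "prox_objective y \<gamma> x (t *\<^sub>R u + (1 - t) *\<^sub>R v)
           \<le> t * prox_objective y \<gamma> x u + (1 - t) * prox_objective y \<gamma> x v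
             - t * (1 - t) / (2 * \<gamma>) * (nrm (u - v))\<^sup>2"
proof -
  let ?p = "t *\<^sub>R u + (1 - t) *\<^sub>R v"
  have lin: "inner a (?p - x) = t * inner a (u - x) + (1 - t) * inner a (v - x)" for a
  proof -
    have "?p - x = t *\<^sub>R (u - x) + (1 - t) *\<^sub>R (v - x)"
      by (simp add: algebra_simps)
    then show ?thesis
      by (simp only: inner_add_right inner_scaleR_right)
  qed
  have "w ?p \<le> t * w u + (1 - t) * w v - t * (1 - t) / 2 * (nrm (u - v))\<^sup>2"
    using w_strongly_convex u v t unfolding strongly_convex_on_def by auto
  then have "(1 / \<gamma>) * w ?p \<le> (1 / \<gamma>) * (t * w u + (1 - t) * w v - t * (1 - t) / 2 * (nrm (u - v))\<^sup>2)"
    using \<open>\<gamma> > 0\<close> by (intro mult_left_mono) auto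
  moreover have "chi ?p \<le> t * chi u + (1 - t) * chi v"
    using chi_convex u v t unfolding convex_on_def by auto
  ultimately show ?thesis
    using lin[of y] lin[of "dw x"]
    by (simp add: prox_objective_def bregman_def algebra_simps diff_divide_distrib add_divide_distrib)
qed

lemma closed_prox_objective_sublevel: "closed {u \<in> Xi. prox_objective y \<gamma> x u \<le> t}"
proof -
  define e where "e u = inner y (u - x) + (1 / \<gamma>) * bregman w dw x u" for u
  have "continuous_on Xi w"
    using w_derivative has_derivative_continuous continuous_on_eq_continuous_within by blast
  then have "continuous_on Xi (\<lambda>u. (u, t - e u))"
    unfolding e_def bregman_def by (intro continuous_intros)
  then have "closed (Xi \<inter> (\<lambda>u. (u, t - e u)) -` {(x, t). x \<in> Xi \<and> chi x \<le> t})"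
    by (rule continuous_closed_preimage[OF _ closed_Xi chi_closed_epigraph])
  moreover have "Xi \<inter> (\<lambda>u. (u, t - e u)) -` {(x, t). x \<in> Xi \<and> chi x \<le> t}
      = {u \<in> Xi. prox_objective y \<gamma> x u \<le> t}"
    by (auto simp: prox_objective_def e_def)
  ultimately show ?thesis by simp
qed

lemma prox_objective_growth:
  assumes "\<gamma> > 0" and x: "x \<in> Xi" and u: "u \<in> Xi" and far: "1 < norm (u - x)"
    and hu: "prox_objective y \<gamma> x u \<le> prox_objective y \<gamma> x x"
    and m: "\<And>v. v \<in> Xi \<Longrightarrow> norm (v - x) = 1 \<Longrightarrow> m \<le> prox_objective y \<gamma> x v"
    and c: "\<And>v. v \<in> bsub blk i \<Longrightarrow> c * norm v \<le> nrm v" "0 \<le> c"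
  shows "(norm (u - x) - 1) * c\<^sup>2 \<le> 2 * \<gamma> * (prox_objective y \<gamma> x x - m)"
proof -
  let ?h = "prox_objective y \<gamma> x"
  define r where "r = norm (u - x)"
  have r: "1 < r"
    using far by (simp add: r_def)
  \<comment> \<open>Strong convexity along the segment from x to u, evaluated where it leaves the unit ball.\<close>
  define v where "v = (1 / r) *\<^sub>R u + (1 - 1 / r) *\<^sub>R x"
  define A where "A = (1 / r) * (1 - 1 / r) / (2 * \<gamma>)"
  have "v \<in> Xi"
    unfolding v_def using r u x by (intro convex_comb_in_Xi) auto
  moreover have "v - x = (1 / r) *\<^sub>R (u - x)"
    by (simp add: v_def algebra_simps)
  then have "norm (v - x) = 1"
    using r by (auto simp: r_def)
  ultimately have "m \<le> ?h v"
    by (rule m)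
  also have "\<dots> \<le> (1 / r) * ?h u + (1 - 1 / r) * ?h x - A * (nrm (u - x))\<^sup>2"
    unfolding v_def A_def using r \<open>\<gamma> > 0\<close> u x by (intro prox_objective_strongly_convex) auto
  also have "\<dots> \<le> ?h x - A * (c * r)\<^sup>2"
  proof -
    have "c * r \<le> nrm (u - x)"
      using c(1)[of "u - x"] u x Xi_bsub by (auto simp: r_def intro: bsub_diff)
    then have "(c * r)\<^sup>2 \<le> (nrm (u - x))\<^sup>2"
      using c r by (intro power_mono) auto
    moreover have "A \<ge> 0"
      using r \<open>\<gamma> > 0\<close> by (simp add: A_def)
    ultimately have "A * (c * r)\<^sup>2 \<le> A * (nrm (u - x))\<^sup>2"
      by (rule mult_left_mono)
    moreover have "(1 / r) * ?h u \<le> (1 / r) * ?h x"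
      using hu r by (intro mult_left_mono) auto
    ultimately show ?thesis
      by (simp add: algebra_simps)
  qed
  also have "A * (c * r)\<^sup>2 = (r - 1) * c\<^sup>2 / (2 * \<gamma>)"
    using r \<open>\<gamma> > 0\<close> by (simp add: A_def field_simps power2_eq_square)
  finally show ?thesis
    using \<open>\<gamma> > 0\<close> by (simp add: r_def field_simps)
qed

lemma bounded_prox_objective_sublevel:
  assumes "\<gamma> > 0" and x: "x \<in> Xi"
  shows "bounded {u \<in> Xi. prox_objective y \<gamma> x u \<le> prox_objective y \<gamma> x x}"
proof -
  let ?h = "prox_objective y \<gamma> x"
  obtain c where c: "c > 0" "\<And>v. v \<in> bsub blk i \<Longrightarrow> c * norm v \<le> nrm v"
    using norm_le_nrm by blast
  define K where "K = Xi \<inter> cball x 1"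
  have "\<exists>u\<in>K. \<forall>v\<in>K. ?h u \<le> ?h v"
    using x closed_Xi closed_prox_objective_sublevel
    by (intro closed_sublevels_attains_inf[where D = Xi]) (auto simp: K_def intro!: closed_Int_compact)
  then obtain m where m: "\<And>v. v \<in> K \<Longrightarrow> m \<le> ?h v"
    by blast
  have "m \<le> ?h x"
    using m x by (simp add: K_def)
  then have R_nonneg: "0 \<le> 2 * \<gamma> * (?h x - m) / c\<^sup>2"
    using \<open>\<gamma> > 0\<close> by simp
  have "dist x u \<le> 1 + 2 * \<gamma> * (?h x - m) / c\<^sup>2" if u: "u \<in> Xi" "?h u \<le> ?h x" for u
  proof (cases "norm (u - x) \<le> 1")
    case True
    then show ?thesis
      using R_nonneg by (simp add: dist_norm norm_minus_commute)
  next
    case False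
    then have "(norm (u - x) - 1) * c\<^sup>2 \<le> 2 * \<gamma> * (?h x - m)"
      using m c u(2) by (intro prox_objective_growth[OF \<open>\<gamma> > 0\<close> x u(1)]) (auto simp: K_def dist_norm norm_minus_commute)
    then show ?thesis
      using c by (simp add: dist_norm norm_minus_commute field_simps)
  qed
  then show ?thesis
    unfolding bounded_def by blast
qed

lemma prox_objective_attains_min:
  assumes "\<gamma> > 0" and x: "x \<in> Xi"
  shows "\<exists>z\<in>Xi. \<forall>u\<in>Xi. prox_objective y \<gamma> x z \<le> prox_objective y \<gamma> x u"
proof -
  let ?h = "prox_objective y \<gamma> x"
  define S where "S = {u \<in> Xi. ?h u \<le> ?h x}"
  have "compact S"
    unfolding S_def compact_eq_bounded_closed
    using bounded_prox_objective_sublevel[OF assms] closed_prox_objective_sublevel by blast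
  moreover have "x \<in> S"
    using x by (simp add: S_def)
  ultimately obtain z where z: "z \<in> S" "\<And>v. v \<in> S \<Longrightarrow> ?h z \<le> ?h v"
    using closed_sublevels_attains_inf[of S Xi ?h] closed_prox_objective_sublevel
    by (auto simp: S_def)
  have "?h z \<le> ?h u" if "u \<in> Xi" for u
    using z that by (cases "?h u \<le> ?h x") (auto simp: S_def)
  then show ?thesis
    using z(1) by (auto simp: S_def)
qed

lemma prox_in_Xi: "\<gamma> > 0 \<Longrightarrow> x \<in> Xi \<Longrightarrow> prox Xi w dw chi x y \<gamma> \<in> Xi"
  and prox_minimal: "\<gamma> > 0 \<Longrightarrow> x \<in> Xi \<Longrightarrow> u \<in> Xi \<Longrightarrow>
    prox_objective y \<gamma> x (prox Xi w dw chi x y \<gamma>) \<le> prox_objective y \<gamma> x u"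
  using someI_ex[OF prox_objective_attains_min[unfolded Bex_def]]
  by (auto simp: prox_def prox_objective_def[abs_def])

lemma prox_descent:
  fixes y :: "real^'n"
  assumes "\<gamma> > 0" and x: "x \<in> Xi"
  defines "z \<equiv> prox Xi w dw chi x y \<gamma>"
  shows "inner y (z - x) + chi z - chi x \<le> - (1 / \<gamma>) * (nrm (z - x))\<^sup>2"
proof -
  let ?h = "prox_objective y \<gamma> x"
  define q where "q = (nrm (z - x))\<^sup>2 / (2 * \<gamma>)"
  have zX: "z \<in> Xi"
    unfolding z_def using \<open>\<gamma> > 0\<close> x by (rule prox_in_Xi)
  have "nrm (x - z) = nrm (z - x)"
    using Xi_bsub x zX by (intro minus_commute) auto
  \<comment> \<open>Comparing z with the points t x + (1 - t) z and letting t tend to 0.\<close>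
  have "?h z - ?h x \<le> - q + t * q" if t: "0 < t" "t < 1" for t
  proof -
    have "?h z \<le> ?h (t *\<^sub>R x + (1 - t) *\<^sub>R z)"
      unfolding z_def using \<open>\<gamma> > 0\<close> x zX t by (intro prox_minimal convex_comb_in_Xi) (auto simp: z_def[symmetric])
    also have "\<dots> \<le> t * ?h x + (1 - t) * ?h z - t * (1 - t) * q"
      using prox_objective_strongly_convex[OF \<open>\<gamma> > 0\<close> x zX, of t y x] t \<open>nrm (x - z) = nrm (z - x)\<close>
      by (simp add: q_def)
    finally have "t * (?h z - ?h x) \<le> t * (- q + t * q)"
      by (simp add: algebra_simps)
    then show ?thesis
      using t by simp
  qed
  then have "eventually (\<lambda>t. ?h z - ?h x \<le> - q + t * q) (at_right 0)"
    unfolding eventually_at_right_field by (auto intro!: exI[of _ 1])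
  moreover have "((\<lambda>t. - q + t * q) \<longlongrightarrow> - q + 0 * q) (at_right 0)"
    by (intro tendsto_intros)
  ultimately have "?h z - ?h x \<le> - q"
    by (intro tendsto_le[of "at_right (0::real)"]) auto
  moreover have "1/2 * (nrm (z - x))\<^sup>2 \<le> bregman w dw x z"
    by (rule bregman_ge_half_sq[OF x zX])
  then have "q \<le> (1 / \<gamma>) * bregman w dw x z"
    using \<open>\<gamma> > 0\<close> by (simp add: q_def field_simps)
  ultimately show ?thesis
    by (simp add: prox_objective_def bregman_def q_def field_simps)
qed

end

section \<open>One step of the method\<close>

locale sbmd_setting =
  fixes blk :: "'n::finite \<Rightarrow> nat" and b :: nat
    and nrm :: "nat \<Rightarrow> real^'n \<Rightarrow> real"
    and Xb :: "nat \<Rightarrow> (real^'n) set"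
    and f :: "real^'n \<Rightarrow> real" and g :: "real^'n \<Rightarrow> real^'n"
    and L :: "nat \<Rightarrow> real"
    and chi :: "nat \<Rightarrow> real^'n \<Rightarrow> real"
    and w :: "nat \<Rightarrow> real^'n \<Rightarrow> real" and dw :: "nat \<Rightarrow> real^'n \<Rightarrow> real^'n"
    and Lbar :: real
  assumes blocks: "blk ` UNIV = {..<b}"
    and norms: "\<forall>i<b. is_block_norm blk i (nrm i)"
    and Xsets: "\<forall>i<b. Xb i \<subseteq> bsub blk i \<and> closed (Xb i) \<and> convex (Xb i)"
    and fgrad: "\<forall>x. (f has_derivative (\<lambda>h. inner (g x) h)) (at x)"
    and Lip: "\<forall>i<b. \<forall>x. \<forall>\<rho>\<in>bsub blk i.
                dual_norm blk i (nrm i) (bproj blk i (g (x + \<rho>)) - bproj blk i (g x)) \<le> L i * nrm i \<rho>"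
    and chi_cvx: "\<forall>i<b. convex_on (Xb i) (chi i)"
    and chi_closed: "\<forall>i<b. closed {(x, t). x \<in> Xb i \<and> chi i x \<le> t}"
    and w_diff: "\<forall>i<b. \<forall>z\<in>Xb i. (w i has_derivative (\<lambda>h. inner (dw i z) h)) (at z within Xb i)"
    and w_sc: "\<forall>i<b. strongly_convex_on (Xb i) (nrm i) (w i)"
    and Lbar_def: "Lbar = Max (L ` {..<b})"
    and Lbar_pos: "0 < Lbar"
begin

abbreviation X where "X \<equiv> Xprod blk b Xb"
abbreviation \<Phi> where "\<Phi> \<equiv> phi_obj blk b f chi"

lemma b_pos: "b > 0"
  using blocks by (metis UNIV_not_empty empty_is_image lessThan_empty_iff neq0_conv)

lemma L_le_Lbar: "i < b \<Longrightarrow> L i \<le> Lbar"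
  unfolding Lbar_def by (intro Max_ge) auto

lemma prox_block_at: "i < b \<Longrightarrow> prox_block blk i (nrm i) (Xb i) (w i) (dw i) (chi i)"
  unfolding prox_block_def prox_block_axioms_def block_norm_def
  using norms Xsets chi_cvx chi_closed w_diff w_sc by auto

definition block_prox :: "nat \<Rightarrow> real^'n \<Rightarrow> real^'n" where
  "block_prox i x = prox (Xb i) (w i) (dw i) (chi i) (bproj blk i x) (bproj blk i (g x)) (1 / Lbar)"

definition block_step :: "nat \<Rightarrow> real^'n \<Rightarrow> real^'n" where
  "block_step i x = x - bproj blk i x + block_prox i x"

definition gradient_mapping :: "real^'n \<Rightarrow> real^'n" where
  "gradient_mapping x = grad_map blk b Xb w dw chi x (g x) (1 / Lbar)"

lemma block_prox_in: "x \<in> X \<Longrightarrow> i < b \<Longrightarrow> block_prox i x \<in> Xb i"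
  unfolding block_prox_def using Lbar_pos
  by (intro prox_block.prox_in_Xi[OF prox_block_at]) (auto simp: Xprod_def)

lemma block_prox_bsub: "x \<in> X \<Longrightarrow> i < b \<Longrightarrow> block_prox i x \<in> bsub blk i"
  using block_prox_in Xsets by blast

lemma bproj_block_step:
  "x \<in> X \<Longrightarrow> i < b \<Longrightarrow> bproj blk j (block_step i x) = (if j = i then block_prox i x else bproj blk j x)"
  using block_prox_bsub[of x i]
  by (auto simp: block_step_def bproj_add bproj_diff bproj_bproj bproj_bsub_same bproj_bsub_other)

lemma block_step_in: "x \<in> X \<Longrightarrow> i < b \<Longrightarrow> block_step i x \<in> X"
  using block_prox_in by (auto simp: Xprod_def bproj_block_step)

lemma bproj_gradient_mapping:
  assumes x: "x \<in> X" and i: "i < b"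
  shows "bproj blk i (gradient_mapping x) = Lbar *\<^sub>R (bproj blk i x - block_prox i x)"
proof -
  have "bproj blk i (gradient_mapping x) = (\<Sum>j<b. bproj blk i (Lbar *\<^sub>R (bproj blk j x - block_prox j x)))"
    by (simp add: gradient_mapping_def grad_map_def bproj_sum block_prox_def)
  also have "\<dots> = (\<Sum>j<b. if j = i then Lbar *\<^sub>R (bproj blk i x - block_prox i x) else 0)"
  proof (rule sum.cong[OF refl])
    fix j assume "j \<in> {..<b}"
    then have "Lbar *\<^sub>R (bproj blk j x - block_prox j x) \<in> bsub blk j"
      using block_prox_bsub[OF x] by (auto intro!: bsub_scaleR bsub_diff bproj_in_bsub)
    then show "bproj blk i (Lbar *\<^sub>R (bproj blk j x - block_prox j x))
        = (if j = i then Lbar *\<^sub>R (bproj blk i x - block_prox i x) else 0)"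
      by (auto simp: bproj_bsub_same bproj_bsub_other)
  qed
  also have "\<dots> = Lbar *\<^sub>R (bproj blk i x - block_prox i x)"
    using i by simp
  finally show ?thesis .
qed

lemma phi_block_step:
  assumes x: "x \<in> X" and i: "i < b"
  shows "\<Phi> (block_step i x)
    = f (block_step i x) + (\<Sum>j<b. chi j (bproj blk j x)) - chi i (bproj blk i x) + chi i (block_prox i x)"
proof -
  have "(\<Sum>j<b. chi j (bproj blk j (block_step i x)))
      = chi i (block_prox i x) + (\<Sum>j\<in>{..<b} - {i}. chi j (bproj blk j x))"
    using i by (simp add: sum.remove[of "{..<b}" i] bproj_block_step[OF x i])
  moreover have "(\<Sum>j<b. chi j (bproj blk j x)) = chi i (bproj blk i x) + (\<Sum>j\<in>{..<b} - {i}. chi j (bproj blk j x))"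
    using i by (simp add: sum.remove[of "{..<b}" i])
  ultimately show ?thesis
    by (simp add: phi_obj_def)
qed

lemma phi_block_step_le:
  assumes x: "x \<in> X" and i: "i < b"
  shows "\<Phi> (block_step i x) \<le> \<Phi> x - Lbar / 2 * (nrm i (block_prox i x - bproj blk i x))\<^sup>2"
proof -
  interpret prox_block blk i "nrm i" "Xb i" "w i" "dw i" "chi i"
    by (rule prox_block_at[OF i])
  define \<rho> where "\<rho> = block_prox i x - bproj blk i x"
  define n2 where "n2 = (nrm i \<rho>)\<^sup>2"
  have \<rho>: "\<rho> \<in> bsub blk i"
    unfolding \<rho>_def using block_prox_bsub[OF x i] by (intro bsub_diff bproj_in_bsub)
  \<comment> \<open>The smooth part grows by at most L_i/2 |\<rho>|^2, the prox step gains Lbar |\<rho>|^2 and L_i \<le> Lbar.\<close>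
  have "f (x + \<rho>) \<le> f x + inner (g x) \<rho> + L i / 2 * n2"
    unfolding n2_def using fgrad Lip i \<rho> by (intro block_descent) auto
  moreover have "inner (g x) \<rho> = inner (bproj blk i (g x)) \<rho>"
    by (rule inner_bproj[OF \<rho>])
  moreover have "inner (bproj blk i (g x)) \<rho> + chi i (block_prox i x) - chi i (bproj blk i x) \<le> - Lbar * n2"
    using prox_descent[of "1 / Lbar" "bproj blk i x" "bproj blk i (g x)"] Lbar_pos x i
    by (simp add: Xprod_def block_prox_def \<rho>_def n2_def)
  moreover have "L i / 2 * n2 \<le> Lbar / 2 * n2"
    using L_le_Lbar[OF i] by (intro mult_right_mono) (auto simp: n2_def)
  moreover have "block_step i x = x + \<rho>"
    by (simp add: block_step_def \<rho>_def)
  ultimately show ?thesis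
    using phi_block_step[OF x i] by (simp add: phi_obj_def n2_def \<rho>_def)
qed

lemma block_gradient_mapping_sq_le:
  assumes x: "x \<in> X" and i: "i < b"
  shows "(nrm i (bproj blk i (gradient_mapping x)))\<^sup>2 \<le> 2 * Lbar * (\<Phi> x - \<Phi> (block_step i x))"
proof -
  interpret block_norm blk i "nrm i"
    using norms i by (simp add: block_norm_def)
  have in_bsub: "bproj blk i x \<in> bsub blk i" "block_prox i x \<in> bsub blk i"
    using block_prox_bsub[OF x i] by (auto intro: bproj_in_bsub)
  have "nrm i (bproj blk i (gradient_mapping x)) = Lbar * nrm i (block_prox i x - bproj blk i x)"
    using bproj_gradient_mapping[OF x i] scaleR minus_commute[OF in_bsub] Lbar_pos in_bsub
    by (simp add: bsub_diff)
  then have "(nrm i (bproj blk i (gradient_mapping x)))\<^sup>2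
      = 2 * Lbar * (Lbar / 2 * (nrm i (block_prox i x - bproj blk i x))\<^sup>2)"
    by (simp add: power_mult_distrib power2_eq_square)
  also have "\<dots> \<le> 2 * Lbar * (\<Phi> x - \<Phi> (block_step i x))"
    using phi_block_step_le[OF x i] Lbar_pos by (intro mult_left_mono) auto
  finally show ?thesis .
qed

lemma bnorm2_gradient_mapping_le:
  assumes "x \<in> X"
  shows "bnorm2 blk b nrm (gradient_mapping x) \<le> 2 * Lbar * (real b * \<Phi> x - (\<Sum>i<b. \<Phi> (block_step i x)))"
proof -
  have "bnorm2 blk b nrm (gradient_mapping x) \<le> (\<Sum>i<b. 2 * Lbar * (\<Phi> x - \<Phi> (block_step i x)))"
    unfolding bnorm2_def using assms by (intro sum_mono block_gradient_mapping_sq_le) auto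
  then show ?thesis
    by (simp add: sum_distrib_left[symmetric] sum_subtractf)
qed

end

section \<open>Telescoping over the random block choices\<close>

lemma sum_PiE_atLeastAtMost_Suc:
  "(\<Sum>idx\<in>Pi\<^sub>E {1..Suc m} (\<lambda>_. A). F idx) = (\<Sum>idx\<in>Pi\<^sub>E {1..m} (\<lambda>_. A). \<Sum>a\<in>A. F (idx(Suc m := a)))"
proof -
  have "Suc m \<notin> {1..m}" by simp
  have "(\<Sum>idx\<in>Pi\<^sub>E {1..Suc m} (\<lambda>_. A). F idx)
      = (\<Sum>idx\<in>(\<lambda>(a, idx). idx(Suc m := a)) ` (A \<times> Pi\<^sub>E {1..m} (\<lambda>_. A)). F idx)"
    by (simp add: atLeastAtMostSuc_conv PiE_insert_eq)
  also have "\<dots> = (\<Sum>(a, idx)\<in>A \<times> Pi\<^sub>E {1..m} (\<lambda>_. A). F (idx(Suc m := a)))"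
    by (subst sum.reindex[OF inj_combinator[OF \<open>Suc m \<notin> {1..m}\<close>]]) (simp add: case_prod_beta comp_def)
  also have "\<dots> = (\<Sum>idx\<in>Pi\<^sub>E {1..m} (\<lambda>_. A). \<Sum>a\<in>A. F (idx(Suc m := a)))"
    by (subst sum.cartesian_product[symmetric]) (rule sum.swap)
  finally show ?thesis .
qed

locale sbmd_run = sbmd_setting +
  fixes x1
  assumes x1_in: "x1 \<in> Xprod blk b Xb"
    and phi_bdd: "bdd_below (phi_obj blk b f chi ` Xprod blk b Xb)"
begin

abbreviation paths :: "nat \<Rightarrow> (nat \<Rightarrow> nat) set" where
  "paths m \<equiv> Pi\<^sub>E {1..m} (\<lambda>_. {..<b})"

definition iterate where
  "iterate m idx = sbmd_iter blk Xb w dw chi g (\<lambda>_. 1 / Lbar) x1 idx m"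

lemma iterate_0: "iterate 0 idx = x1"
  by (simp add: iterate_def)

lemma iterate_Suc: "iterate (Suc m) idx = block_step (idx (Suc m)) (iterate m idx)"
  by (simp add: iterate_def Let_def block_step_def block_prox_def)

lemma iterate_cong: "(\<And>j. 1 \<le> j \<Longrightarrow> j \<le> m \<Longrightarrow> idx j = idx' j) \<Longrightarrow> iterate m idx = iterate m idx'"
  by (induction m) (auto simp: iterate_0 iterate_Suc)

lemma iterate_in: "idx \<in> paths m \<Longrightarrow> iterate m idx \<in> X"
proof -
  have "\<forall>j\<in>{1..m}. idx j < b \<Longrightarrow> iterate m idx \<in> X"
    by (induction m) (auto simp: iterate_0 iterate_Suc x1_in block_step_in)
  then show "idx \<in> paths m \<Longrightarrow> iterate m idx \<in> X"
    by (auto simp: PiE_def Pi_def)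
qed

text \<open>Sums over all b^m equally likely index sequences, i.e. b^m times the corresponding expectations.\<close>

definition gm_sum :: "nat \<Rightarrow> real" where
  "gm_sum m = (\<Sum>idx\<in>paths m. \<Sum>k=1..m. bnorm2 blk b nrm (gradient_mapping (iterate (k - 1) idx)))"

definition phi_sum :: "nat \<Rightarrow> real" where
  "phi_sum m = (\<Sum>idx\<in>paths m. \<Phi> (iterate m idx))"

lemma phi_sum_Suc: "phi_sum (Suc m) = (\<Sum>idx\<in>paths m. \<Sum>i<b. \<Phi> (block_step i (iterate m idx)))"
proof -
  have "phi_sum (Suc m) = (\<Sum>idx\<in>paths m. \<Sum>i<b. \<Phi> (block_step i (iterate m (idx(Suc m := i)))))"
    by (simp only: phi_sum_def sum_PiE_atLeastAtMost_Suc iterate_Suc fun_upd_same)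
  also have "\<dots> = (\<Sum>idx\<in>paths m. \<Sum>i<b. \<Phi> (block_step i (iterate m idx)))"
    by (intro sum.cong refl arg_cong[where f = \<Phi>] arg_cong[where f = "block_step _"] iterate_cong) auto
  finally show ?thesis .
qed

lemma gm_sum_Suc:
  "gm_sum (Suc m) = real b * gm_sum m + real b * (\<Sum>idx\<in>paths m. bnorm2 blk b nrm (gradient_mapping (iterate m idx)))"
proof -
  let ?B = "\<lambda>x. bnorm2 blk b nrm (gradient_mapping x)"
  have "gm_sum (Suc m) = (\<Sum>idx\<in>paths m. \<Sum>i<b. \<Sum>k=1..Suc m. ?B (iterate (k - 1) (idx(Suc m := i))))"
    by (simp only: gm_sum_def sum_PiE_atLeastAtMost_Suc)
  also have "\<dots> = (\<Sum>idx\<in>paths m. \<Sum>i<b. \<Sum>k=1..Suc m. ?B (iterate (k - 1) idx))"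
    by (intro sum.cong refl arg_cong[where f = ?B] iterate_cong) auto
  also have "\<dots> = (\<Sum>idx\<in>paths m. real b * ((\<Sum>k=1..m. ?B (iterate (k - 1) idx)) + ?B (iterate m idx)))"
    by simp
  finally show ?thesis
    by (simp add: gm_sum_def sum.distrib sum_distrib_left distrib_left)
qed

lemma gm_sum_le: "gm_sum m \<le> 2 * Lbar * real b * (real b ^ m * \<Phi> x1 - phi_sum m)"
proof (induction m)
  case 0
  then show ?case
    by (simp add: gm_sum_def phi_sum_def iterate_0)
next
  case (Suc m)
  have "(\<Sum>idx\<in>paths m. bnorm2 blk b nrm (gradient_mapping (iterate m idx)))
      \<le> (\<Sum>idx\<in>paths m. 2 * Lbar * (real b * \<Phi> (iterate m idx) - (\<Sum>i<b. \<Phi> (block_step i (iterate m idx)))))"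
    by (intro sum_mono bnorm2_gradient_mapping_le iterate_in)
  also have "\<dots> = 2 * Lbar * (real b * phi_sum m - phi_sum (Suc m))"
    unfolding phi_sum_Suc by (simp add: phi_sum_def sum_subtractf sum_distrib_left right_diff_distrib)
  finally have "real b * (\<Sum>idx\<in>paths m. bnorm2 blk b nrm (gradient_mapping (iterate m idx)))
      \<le> real b * (2 * Lbar * (real b * phi_sum m - phi_sum (Suc m)))"
    by (intro mult_left_mono) auto
  moreover have "real b * gm_sum m \<le> real b * (2 * Lbar * real b * (real b ^ m * \<Phi> x1 - phi_sum m))"
    using Suc.IH by (intro mult_left_mono) auto
  ultimately show ?case
    unfolding gm_sum_Suc by (simp add: algebra_simps)
qed

lemma phi_sum_ge_Inf: "real b ^ m * Inf (\<Phi> ` X) \<le> phi_sum m"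
proof -
  have "(\<Sum>idx\<in>paths m. Inf (\<Phi> ` X)) \<le> phi_sum m"
    unfolding phi_sum_def by (intro sum_mono cInf_lower phi_bdd imageI iterate_in)
  then show ?thesis
    by (simp add: card_PiE)
qed

lemma probR_constant_stepsize:
  assumes "k \<in> {1..N}"
  shows "probR b (\<lambda>_. 1 / real b) L (\<lambda>_. 1 / Lbar) N k = 1 / real N"
proof -
  define M where "M = Min ((\<lambda>i. 1 / real b * (1 - L i / 2 * (1 / Lbar))) ` {..<b})"
  have "0 < 1 / real b * (1 - L i / 2 * (1 / Lbar))" if "i < b" for i
  proof -
    have "L i / 2 * (1 / Lbar) \<le> 1 / 2"
      using L_le_Lbar[OF that] Lbar_pos by (simp add: field_simps)
    then show ?thesis
      using b_pos by simp
  qed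
  then have "M > 0"
    unfolding M_def using b_pos by (subst Min_gr_iff) auto
  moreover have "probR b (\<lambda>_. 1 / real b) L (\<lambda>_. 1 / Lbar) N k = (1 / Lbar * M) / (\<Sum>j=1..N. 1 / Lbar * M)"
    by (simp only: probR_def M_def)
  ultimately show ?thesis
    using assms Lbar_pos by simp
qed

lemma expected_gm2_eq_gm_sum:
  "expected_gm2 blk b nrm Xb w dw chi g (\<lambda>_. 1 / real b) L (\<lambda>_. 1 / Lbar) x1 N
     = (1 / real b) ^ N / real N * gm_sum N"
proof -
  have "expected_gm2 blk b nrm Xb w dw chi g (\<lambda>_. 1 / real b) L (\<lambda>_. 1 / Lbar) x1 N
      = (\<Sum>idx\<in>paths N. (1 / real b) ^ N *
           (\<Sum>k=1..N. 1 / real N * bnorm2 blk b nrm (gradient_mapping (iterate (k - 1) idx))))"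
    unfolding expected_gm2_def
    by (intro sum.cong refl arg_cong2[where f = "(*)"])
       (auto simp: probR_constant_stepsize gradient_mapping_def iterate_def intro!: sum.cong)
  then show ?thesis
    by (simp add: gm_sum_def sum_distrib_left[symmetric] sum_divide_distrib[symmetric])
qed

end

theorem corollary4p4:
  fixes blk :: "'n::finite \<Rightarrow> nat" and b :: nat
    and nrm :: "nat \<Rightarrow> real^'n \<Rightarrow> real"
    and Xb :: "nat \<Rightarrow> (real^'n) set"
    and f :: "real^'n \<Rightarrow> real" and g :: "real^'n \<Rightarrow> real^'n"
    and L :: "nat \<Rightarrow> real"
    and chi :: "nat \<Rightarrow> real^'n \<Rightarrow> real"
    and w :: "nat \<Rightarrow> real^'n \<Rightarrow> real" and dw :: "nat \<Rightarrow> real^'n \<Rightarrow> real^'n"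
    and Q :: real and x1 :: "real^'n" and N :: nat and Lbar :: real
  assumes blocks: "blk ` UNIV = {..<b}"
    and norms: "\<forall>i<b. is_block_norm blk i (nrm i)"
    and Xsets: "\<forall>i<b. Xb i \<subseteq> bsub blk i \<and> closed (Xb i) \<and> convex (Xb i)"
    and fgrad: "\<forall>x. (f has_derivative (\<lambda>h. inner (g x) h)) (at x)"
    and Lnonneg: "\<forall>i<b. 0 \<le> L i"
    and Lip: "\<forall>i<b. \<forall>x. \<forall>\<rho>\<in>bsub blk i.
                dual_norm blk i (nrm i) (bproj blk i (g (x + \<rho>)) - bproj blk i (g x)) \<le> L i * nrm i \<rho>"
    and chi_cvx: "\<forall>i<b. convex_on (Xb i) (chi i)"
    and chi_closed: "\<forall>i<b. closed {(x, t). x \<in> Xb i \<and> chi i x \<le> t}"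
    and w_diff: "\<forall>i<b. \<forall>z\<in>Xb i. (w i has_derivative (\<lambda>h. inner (dw i z) h)) (at z within Xb i)"
    and w_C1: "\<forall>i<b. continuous_on (Xb i) (dw i)"
    and w_sc: "\<forall>i<b. strongly_convex_on (Xb i) (nrm i) (w i)"
    and qgrowth: "\<forall>i<b. \<forall>z\<in>Xb i. \<forall>x\<in>Xb i. bregman (w i) (dw i) z x \<le> Q / 2 * (nrm i (z - x))\<^sup>2"
    and x1X: "x1 \<in> Xprod blk b Xb"
    and phi_bdd: "bdd_below (phi_obj blk b f chi ` Xprod blk b Xb)"
    and Lbar_def: "Lbar = Max (L ` {..<b})"
    and Lbar_pos: "0 < Lbar"
    and N: "1 \<le> N"
  shows "expected_gm2 blk b nrm Xb w dw chi g (\<lambda>_. 1 / real b) L (\<lambda>_. 1 / Lbar) x1 N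
           \<le> 2 * real b * Lbar * (phi_obj blk b f chi x1 - Inf (phi_obj blk b f chi ` Xprod blk b Xb)) / real N"
proof -
  interpret sbmd_run blk b nrm Xb f g L chi w dw Lbar x1
    using assms by unfold_locales auto
  define I where "I = Inf (\<Phi> ` X)"
  have "expected_gm2 blk b nrm Xb w dw chi g (\<lambda>_. 1 / real b) L (\<lambda>_. 1 / Lbar) x1 N
      = (1 / real b) ^ N / real N * gm_sum N"
    by (rule expected_gm2_eq_gm_sum)
  also have "\<dots> \<le> (1 / real b) ^ N / real N * (2 * Lbar * real b * (real b ^ N * \<Phi> x1 - phi_sum N))"
    by (intro mult_left_mono gm_sum_le) simp
  also have "\<dots> \<le> (1 / real b) ^ N / real N * (2 * Lbar * real b * (real b ^ N * \<Phi> x1 - real b ^ N * I))"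
    using phi_sum_ge_Inf[of N] Lbar_pos unfolding I_def by (intro mult_left_mono) auto
  also have "\<dots> = 2 * real b * Lbar * (\<Phi> x1 - I) / real N"
    using b_pos N by (simp add: power_one_over field_simps)
  finally show ?thesis
    by (simp add: I_def)
qed

end
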